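(* Let $A$ be a circular $m\times n$ matrix, $b\in\mathbb{Z}_+^m$ and $\beta$ a nonnegative integer. Then the polytope $Q_\beta(A,b):=\{x\in\mathbb{R}^n: Ax\ge b,\ x\ge0,\ \mathbf{1}^Tx=\beta\}$ is integral (all its vertices are integral).
   Context: Notation: $[n]=\{1,\dots,n\}$ with addition mod $n$; for $a,c\in[n]$ with $t\ge0$ minimal such that $a+t\equiv c\pmod n$, $[a,c)_n=\{a,a+1,\dots,a+t-1\}$ (mod $n$). An $m\times n$ $\{0,1\}$-matrix $A$ (columns indexed by $[n]$) is circular if for each row $i$ there are $\ell_i\in[n]$ and an integer $k_i$ with $2\le k_i\le n-1$ such that row $i$ is the incidence vector of $[\ell_i,\ell_i+k_i)_n$. $\mathbf{1}$ denotes the all-ones vector. *)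

theory Defs
  imports Complex_Main
begin

text \<open>Columns are indexed by 0..<n (instead of 1..n), rows by 0..<m; addition of
column indices is mod n. Vectors in R^n are functions nat => real vanishing outside 0..<n.\<close>

definition circular_matrix :: "nat \<Rightarrow> nat \<Rightarrow> (nat \<Rightarrow> nat \<Rightarrow> real) \<Rightarrow> bool" where
  "circular_matrix m n A \<longleftrightarrow>
     (\<forall>i<m. \<exists>l<n. \<exists>k::nat. 2 \<le> k \<and> k \<le> n - 1 \<and>
        (\<forall>j<n. A i j = (if \<exists>t<k. j = (l + t) mod n then 1 else 0)))"

definition Q_poly :: "nat \<Rightarrow> nat \<Rightarrow> (nat \<Rightarrow> nat \<Rightarrow> real) \<Rightarrow> (nat \<Rightarrow> int) \<Rightarrow> nat \<Rightarrow> (nat \<Rightarrow> real) set" where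
  "Q_poly m n A b \<beta> = {x. (\<forall>j. n \<le> j \<longrightarrow> x j = 0)
       \<and> (\<forall>i<m. (\<Sum>j<n. A i j * x j) \<ge> real_of_int (b i))
       \<and> (\<forall>j<n. x j \<ge> 0)
       \<and> (\<Sum>j<n. x j) = real \<beta>}"

definition is_vertex :: "(nat \<Rightarrow> real) set \<Rightarrow> (nat \<Rightarrow> real) \<Rightarrow> bool" where
  "is_vertex P x \<longleftrightarrow> x \<in> P \<and>
     \<not> (\<exists>y\<in>P. \<exists>z\<in>P. y \<noteq> z \<and> (\<exists>t::real. 0 < t \<and> t < 1 \<and> x = (\<lambda>j. t * y j + (1 - t) * z j)))"

definition integral_polytope :: "(nat \<Rightarrow> real) set \<Rightarrow> bool" where
  "integral_polytope P \<longleftrightarrow> (\<forall>x. is_vertex P x \<longrightarrow> (\<forall>j. x j \<in> \<int>))"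

end

theory Submission
  imports Defs
begin

text \<open>A row of a circular matrix sums x over a cyclic interval, so with the prefix
sums S p = x 0 + ... + x (p-1) its value is S p - S q + S r where r = 0 or p = n.
Suppose some S p0 is not an integer, and let g p (prefix_class) be the indicator of
S p - S p0 being an integer, 0 \<le> p \<le> n. The jumps d j = g (j+1) - g j (class_jump)
form a nonzero direction which vanishes where x j = 0 (then S (j+1) - S j is an
integer), sums to g n - g 0 = 0 (S n = \<beta>), and vanishes on every tight row: there
S p - S q + S r is the integer b i, so the prefix sums whose g-values enter the row
value of d pairwise differ by integers. Hence x \<plusminus> \<epsilon> d lie in the polytope for small
\<epsilon> > 0, and x is not a vertex.\<close>

lemma cyclic_window_iff:
  fixes j l k n :: nat
  assumes "j < n" "l < n" "k \<le> n"
  shows "(\<exists>t<k. j = (l + t) mod n) \<longleftrightarrow> l \<le> j \<and> j < l + k \<or> j + n < l + k"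
proof
  assume "\<exists>t<k. j = (l + t) mod n"
  then obtain t where t: "t < k" "j = (l + t) mod n" by blast
  show "l \<le> j \<and> j < l + k \<or> j + n < l + k"
  proof (cases "l + t < n")
    case True
    then show ?thesis using t by simp
  next
    case False
    then have "j = l + t - n"
      using t assms by (simp add: le_mod_geq)
    then show ?thesis using t False by linarith
  qed
next
  assume "l \<le> j \<and> j < l + k \<or> j + n < l + k"
  then show "\<exists>t<k. j = (l + t) mod n"
  proof
    assume "l \<le> j \<and> j < l + k"
    then show ?thesis using assms by (intro exI[of _ "j - l"]) auto
  next
    assume "j + n < l + k"
    then show ?thesis using assms by (intro exI[of _ "j + n - l"]) auto
  qed
qed

lemma circular_row_prefix_sums:
  assumes "circular_matrix m n A" "i < m"
  obtains p q r where "p \<le> n" "q \<le> n" "r \<le> n" "r = 0 \<or> p = n"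
    "\<And>v. (\<Sum>j<n. A i j * v j) = (\<Sum>j<p. v j) - (\<Sum>j<q. v j) + (\<Sum>j<r. v j)"
proof -
  obtain l k where lk: "l < n" "k \<le> n - 1"
    and row: "\<forall>j<n. A i j = (if \<exists>t<k. j = (l + t) mod n then 1 else 0)"
    using assms unfolding circular_matrix_def by blast
  have k: "k \<le> n" using lk by simp
  define p where "p = min (l + k) n"
  define r where "r = l + k - n"
  have windows: "{j \<in> {..<n}. l \<le> j \<and> j < l + k} = {l..<p}" "{j \<in> {..<n}. j + n < l + k} = {..<r}"
    using lk k by (auto simp: p_def r_def)
  have row_eq: "(\<Sum>j<n. A i j * v j) = (\<Sum>j<p. v j) - (\<Sum>j<l. v j) + (\<Sum>j<r. v j)" for v
  proof -
    have "(\<Sum>j<n. A i j * v j)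
        = (\<Sum>j<n. (if l \<le> j \<and> j < l + k then v j else 0) + (if j + n < l + k then v j else 0))"
      using lk k by (intro sum.cong) (auto simp: row cyclic_window_iff)
    also have "\<dots> = (\<Sum>j\<in>{l..<p}. v j) + (\<Sum>j<r. v j)"
      by (simp only: sum.distrib sum.inter_filter[symmetric] finite_lessThan windows)
    also have "(\<Sum>j\<in>{l..<p}. v j) = (\<Sum>j<p. v j) - (\<Sum>j<l. v j)"
      using sum_diff_nat_ivl[of 0 l p v] lk by (simp add: p_def atLeast0LessThan)
    finally show ?thesis .
  qed
  show thesis
    by (rule that[OF _ _ _ _ row_eq]) (use lk k in \<open>auto simp: p_def r_def\<close>)
qed

lemma small_perturbation_nonneg:
  fixes s c :: "'a \<Rightarrow> real"
  assumes "finite I" "\<And>k. k \<in> I \<Longrightarrow> 0 \<le> s k" "\<And>k. k \<in> I \<Longrightarrow> s k = 0 \<Longrightarrow> c k = 0"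
  shows "\<exists>\<epsilon>>0. \<forall>e. \<bar>e\<bar> \<le> \<epsilon> \<longrightarrow> (\<forall>k\<in>I. 0 \<le> s k + e * c k)"
  using assms
proof (induction I rule: finite_induct)
  case empty
  show ?case by (intro exI[of _ 1]) simp
next
  case (insert k I)
  then obtain \<epsilon> where \<epsilon>: "\<epsilon> > 0" "\<forall>e. \<bar>e\<bar> \<le> \<epsilon> \<longrightarrow> (\<forall>k\<in>I. 0 \<le> s k + e * c k)"
    by blast
  define \<delta> where "\<delta> = (if s k = 0 then \<epsilon> else min \<epsilon> (s k / (\<bar>c k\<bar> + 1)))"
  have "0 \<le> s k + e * c k" if "\<bar>e\<bar> \<le> \<delta>" for e
  proof (cases "s k = 0")
    case False
    have "\<bar>e\<bar> \<le> s k / (\<bar>c k\<bar> + 1)"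
      using that False by (simp add: \<delta>_def)
    then have "\<bar>e * c k\<bar> \<le> s k / (\<bar>c k\<bar> + 1) * \<bar>c k\<bar>"
      unfolding abs_mult by (rule mult_right_mono) simp
    also have "\<dots> \<le> s k"
      using insert.prems(1)[of k] by (simp add: divide_le_eq mult_left_mono)
    finally show ?thesis by linarith
  qed (use insert.prems in auto)
  moreover have "\<delta> > 0" "\<delta> \<le> \<epsilon>"
    using \<epsilon>(1) insert.prems(1)[of k] by (auto simp: \<delta>_def)
  ultimately show ?case
    using \<epsilon>(2) by (intro exI[of _ \<delta>]) auto
qed

lemma Q_poly_perturbation:
  assumes x: "x \<in> Q_poly m n A b \<beta>"
    and "\<And>j. n \<le> j \<Longrightarrow> d j = 0" "\<And>j. j < n \<Longrightarrow> x j = 0 \<Longrightarrow> d j = 0"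
    and "(\<Sum>j<n. d j) = 0"
    and "\<And>i. i < m \<Longrightarrow> (\<Sum>j<n. A i j * x j) = b i \<Longrightarrow> (\<Sum>j<n. A i j * d j) = 0"
  shows "\<exists>\<epsilon>>0. \<forall>e. \<bar>e\<bar> \<le> \<epsilon> \<longrightarrow> (\<lambda>j. x j + e * d j) \<in> Q_poly m n A b \<beta>"
proof -
  have x_Q: "\<forall>j. n \<le> j \<longrightarrow> x j = 0" "\<forall>i<m. (\<Sum>j<n. A i j * x j) \<ge> b i"
    "\<forall>j<n. x j \<ge> 0" "(\<Sum>j<n. x j) = \<beta>"
    using x unfolding Q_poly_def by auto
  obtain \<epsilon>1 where \<epsilon>1: "\<epsilon>1 > 0" "\<forall>e. \<bar>e\<bar> \<le> \<epsilon>1 \<longrightarrow> (\<forall>j\<in>{..<n}. 0 \<le> x j + e * d j)"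
    using small_perturbation_nonneg[of "{..<n}" x d] x_Q assms(3) by auto
  obtain \<epsilon>2 where \<epsilon>2: "\<epsilon>2 > 0" "\<forall>e. \<bar>e\<bar> \<le> \<epsilon>2 \<longrightarrow>
      (\<forall>i\<in>{..<m}. 0 \<le> ((\<Sum>j<n. A i j * x j) - b i) + e * (\<Sum>j<n. A i j * d j))"
    using small_perturbation_nonneg[of "{..<m}" "\<lambda>i. (\<Sum>j<n. A i j * x j) - b i"
        "\<lambda>i. \<Sum>j<n. A i j * d j"] x_Q assms(5) by auto
  have "(\<lambda>j. x j + e * d j) \<in> Q_poly m n A b \<beta>" if "\<bar>e\<bar> \<le> min \<epsilon>1 \<epsilon>2" for e
    using that \<epsilon>1 \<epsilon>2 x_Q assms(2,4)
    by (auto simp: Q_poly_def sum.distrib algebra_simps sum_distrib_left[symmetric])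
  then show ?thesis
    using \<epsilon>1(1) \<epsilon>2(1) by (intro exI[of _ "min \<epsilon>1 \<epsilon>2"]) auto
qed

lemma not_vertex_if_two_sided_perturbation:
  assumes "(\<lambda>j. x j + e * d j) \<in> P" "(\<lambda>j. x j - e * d j) \<in> P" "e \<noteq> 0" "d j \<noteq> 0"
  shows "\<not> is_vertex P x"
proof -
  let ?y = "\<lambda>j. x j + e * d j" and ?z = "\<lambda>j. x j - e * d j"
  have "?y \<noteq> ?z"
    using assms(3,4) by (auto dest: fun_cong[where x = j])
  moreover have "x = (\<lambda>j. 1/2 * ?y j + (1 - 1/2) * ?z j)"
    by (simp add: algebra_simps)
  ultimately have "\<exists>y\<in>P. \<exists>z\<in>P. y \<noteq> z \<and> (\<exists>t::real. 0 < t \<and> t < 1 \<and> x = (\<lambda>j. t * y j + (1 - t) * z j))"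
    using assms(1,2) by (intro bexI[of _ ?y] bexI[of _ ?z] conjI exI[of _ "1/2"]) auto
  then show ?thesis
    unfolding is_vertex_def by blast
qed

definition prefix_class :: "(nat \<Rightarrow> real) \<Rightarrow> nat \<Rightarrow> nat \<Rightarrow> real" where
  "prefix_class x p0 p = (if (\<Sum>j<p. x j) - (\<Sum>j<p0. x j) \<in> \<int> then 1 else 0)"

definition class_jump :: "nat \<Rightarrow> (nat \<Rightarrow> real) \<Rightarrow> nat \<Rightarrow> nat \<Rightarrow> real" where
  "class_jump n x p0 j = (if j < n then prefix_class x p0 (Suc j) - prefix_class x p0 j else 0)"

lemma prefix_class_cong:
  assumes "(\<Sum>j<p. x j) - (\<Sum>j<q. x j) \<in> \<int>"
  shows "prefix_class x p0 p = prefix_class x p0 q"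
proof -
  have "(\<Sum>j<p. x j) - (\<Sum>j<p0. x j) \<in> \<int> \<longleftrightarrow> (\<Sum>j<q. x j) - (\<Sum>j<p0. x j) \<in> \<int>"
    using Ints_add[OF _ assms, of "(\<Sum>j<q. x j) - (\<Sum>j<p0. x j)"]
      Ints_diff[OF _ assms, of "(\<Sum>j<p. x j) - (\<Sum>j<p0. x j)"]
    by (auto simp: algebra_simps)
  then show ?thesis
    by (simp add: prefix_class_def)
qed

lemma sum_class_jump:
  assumes "p \<le> n"
  shows "(\<Sum>j<p. class_jump n x p0 j) = prefix_class x p0 p - prefix_class x p0 0"
proof -
  have "(\<Sum>j<p. class_jump n x p0 j) = (\<Sum>j<p. prefix_class x p0 (Suc j) - prefix_class x p0 j)"
    using assms by (intro sum.cong) (auto simp: class_jump_def)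
  then show ?thesis
    by (simp add: sum_lessThan_telescope)
qed

lemma class_jump_eq_0_if_Ints:
  assumes "x j \<in> \<int>"
  shows "class_jump n x p0 j = 0"
  using assms prefix_class_cong[where p = "Suc j" and q = j and x = x] by (simp add: class_jump_def)

lemma class_jump_nonzero:
  assumes "p0 \<le> n" "(\<Sum>j<p0. x j) \<notin> \<int>"
  obtains j where "class_jump n x p0 j \<noteq> 0"
proof -
  have "(\<Sum>j<p0. class_jump n x p0 j) = 1"
    using assms by (simp add: sum_class_jump prefix_class_def minus_in_Ints_iff)
  then show thesis
    using that by (metis sum.neutral zero_neq_one)
qed

lemma circular_row_class_jump:
  assumes "circular_matrix m n A" "i < m"
    and "(\<Sum>j<n. x j) \<in> \<int>" "(\<Sum>j<n. A i j * x j) \<in> \<int>"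
  shows "(\<Sum>j<n. A i j * class_jump n x p0 j) = 0"
proof -
  obtain p q r where pqr: "p \<le> n" "q \<le> n" "r \<le> n" "r = 0 \<or> p = n"
    and row: "\<And>v. (\<Sum>j<n. A i j * v j) = (\<Sum>j<p. v j) - (\<Sum>j<q. v j) + (\<Sum>j<r. v j)"
    using circular_row_prefix_sums[OF assms(1,2)] by blast
  let ?g = "prefix_class x p0"
  have "(\<Sum>j<n. A i j * class_jump n x p0 j) = ?g p - ?g q + ?g r - ?g 0"
    using pqr by (simp add: row sum_class_jump)
  also have "\<dots> = 0"
    using pqr(4)
  proof
    assume "r = 0"
    then have "(\<Sum>j<p. x j) - (\<Sum>j<q. x j) \<in> \<int>"
      using assms(4) by (simp add: row)
    then show ?thesis
      using \<open>r = 0\<close> by (simp add: prefix_class_cong)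
  next
    assume "p = n"
    then have "(\<Sum>j<r. x j) - (\<Sum>j<q. x j) = (\<Sum>j<n. A i j * x j) - (\<Sum>j<n. x j)"
      by (simp add: row)
    then have "(\<Sum>j<r. x j) - (\<Sum>j<q. x j) \<in> \<int>"
      using assms(3,4) by simp
    moreover have "?g n = ?g 0"
      using assms(3) by (intro prefix_class_cong) simp
    ultimately show ?thesis
      using \<open>p = n\<close> by (simp add: prefix_class_cong)
  qed
  finally show ?thesis .
qed

lemma vertex_prefix_sum_Ints:
  assumes "circular_matrix m n A" "is_vertex (Q_poly m n A b \<beta>) x" "p \<le> n"
  shows "(\<Sum>j<p. x j) \<in> \<int>"
proof (rule ccontr)
  assume frac: "(\<Sum>j<p. x j) \<notin> \<int>"
  let ?Q = "Q_poly m n A b \<beta>" and ?d = "class_jump n x p"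
  have x: "x \<in> ?Q"
    using assms(2) unfolding is_vertex_def by blast
  then have total: "(\<Sum>j<n. x j) = \<beta>"
    unfolding Q_poly_def by blast
  have "(\<Sum>j<n. ?d j) = 0"
    using total prefix_class_cong[where p = n and q = 0 and x = x] by (simp add: sum_class_jump)
  moreover have "?d j = 0" if "n \<le> j" for j
    using that by (simp add: class_jump_def)
  moreover have "(\<Sum>j<n. A i j * ?d j) = 0" if "i < m" "(\<Sum>j<n. A i j * x j) = b i" for i
    using that total by (intro circular_row_class_jump[OF assms(1)]) auto
  ultimately obtain \<epsilon> where \<epsilon>: "\<epsilon> > 0" "\<forall>e. \<bar>e\<bar> \<le> \<epsilon> \<longrightarrow> (\<lambda>j. x j + e * ?d j) \<in> ?Q"
    using Q_poly_perturbation[OF x, of ?d] class_jump_eq_0_if_Ints by force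
  then have "(\<lambda>j. x j + \<epsilon> * ?d j) \<in> ?Q" "(\<lambda>j. x j - \<epsilon> * ?d j) \<in> ?Q"
    using \<epsilon>(2)[rule_format, of "- \<epsilon>"] by auto
  moreover obtain j where "?d j \<noteq> 0"
    using class_jump_nonzero[OF assms(3) frac] .
  ultimately have "\<not> is_vertex ?Q x"
    using \<epsilon>(1) not_vertex_if_two_sided_perturbation[where e = \<epsilon> and d = ?d] by auto
  then show False
    using assms(2) by blast
qed

lemma Ints_if_prefix_sums_Ints:
  fixes x :: "nat \<Rightarrow> real"
  assumes "\<And>p. p \<le> n \<Longrightarrow> (\<Sum>j<p. x j) \<in> \<int>" "\<And>j. n \<le> j \<Longrightarrow> x j = 0"
  shows "x j \<in> \<int>"
proof (cases "j < n")
  case True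
  have "x j = (\<Sum>i<Suc j. x i) - (\<Sum>i<j. x i)"
    by simp
  then show ?thesis
    using True assms(1)[of "Suc j"] assms(1)[of j] by simp
qed (use assms(2) in simp)

theorem lemma3p1:
  fixes m n :: nat and A :: "nat \<Rightarrow> nat \<Rightarrow> real" and b :: "nat \<Rightarrow> int" and \<beta> :: nat
  assumes "circular_matrix m n A"
    and "\<forall>i<m. b i \<ge> 0"
  shows "integral_polytope (Q_poly m n A b \<beta>)"
  unfolding integral_polytope_def
proof (intro allI impI)
  fix x j
  assume vertex: "is_vertex (Q_poly m n A b \<beta>) x"
  then have "\<And>j. n \<le> j \<Longrightarrow> x j = 0"
    unfolding is_vertex_def Q_poly_def by blast
  then show "x j \<in> \<int>"
    using vertex_prefix_sum_Ints[OF assms(1) vertex] by (rule Ints_if_prefix_sums_Ints[rotated])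
qed

end
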